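(* Let $c\in[0,1)$, $b(c)=\tfrac12-c$, $f_c(x)=\log|\cos\pi(x+c)|$. If $\chi_-(f_c,T(b(c)))=-\infty$, then $\alpha(c):=\inf_{\mu\in\mathcal M_T}\int f_c\,d\mu=-\infty$.
   Context: $\mathbb T=\mathbb R/\mathbb Z$, $Tx=2x\bmod1$, $\mathcal M_T$ the set of $T$-invariant Borel probability measures. For $x\in\mathbb T$, $\chi_-(f_c,x)=\liminf_{n\to\infty}\frac1n\sum_{i=0}^{n-1}f_c(T^ix)$ and $\chi_+(f_c,x)$ is the corresponding limsup. Convention $\log0=-\infty$. *)

theory Defs
  imports "HOL-Probability.Probability"
begin

text \<open>The circle R/Z is represented by the interval [0,1) of reals (with its Borel sets);
  functions on R/Z are 1-periodic functions on R.\<close>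

definition Tmap :: "real \<Rightarrow> real" where
  "Tmap x = frac (2 * x)"

definition fc :: "real \<Rightarrow> real \<Rightarrow> ereal" where
  "fc c x = (if cos (pi * (x + c)) = 0 then -\<infinity> else ereal (ln \<bar>cos (pi * (x + c))\<bar>))"

definition bc :: "real \<Rightarrow> real" where
  "bc c = 1/2 - c"

definition MT :: "real measure set" where
  "MT = {\<mu>. sets \<mu> = sets (restrict_space borel {0..<1}) \<and> prob_space \<mu> \<and>
            (\<forall>A\<in>sets \<mu>. emeasure \<mu> (Tmap -` A \<inter> space \<mu>) = emeasure \<mu> A)}"

text \<open>Integral of f_c (a function bounded above by 0) with values in [-infinity,0].\<close>
definition int_fc :: "real \<Rightarrow> real measure \<Rightarrow> ereal" where
  "int_fc c \<mu> = - enn2ereal (\<integral>\<^sup>+ x. e2ennreal (- fc c x) \<partial>\<mu>)"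

definition alpha :: "real \<Rightarrow> ereal" where
  "alpha c = Inf (int_fc c ` MT)"

definition chi_minus :: "(real \<Rightarrow> ereal) \<Rightarrow> real \<Rightarrow> ereal" where
  "chi_minus f x = liminf (\<lambda>n. ereal (1 / real n) * (\<Sum>i<n. f ((Tmap ^^ i) x)))"

end

theory Submission
  imports Defs
begin

text \<open>
  Writing \<open>b = b(c)\<close>, we have \<open>f\<^sub>c(x) = log \<bar>sin \<pi>(x - b)\<bar>\<close>, so \<open>f\<^sub>c\<close> is very negative
  exactly near \<open>b\<close>. The uniform measure on a periodic orbit is invariant and integrates \<open>f\<^sub>c\<close> to
  the orbit average, so it suffices to find, for every \<open>K \<ge> 0\<close>, a periodic orbit of average
  at most \<open>-K\<close>. Pick \<open>L\<close> with \<open>2\<^sup>L \<ge> \<pi> e\<^sup>K\<close> and, by the hypothesis, \<open>N\<close> such that the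
  Birkhoff sum of length \<open>N\<close> at \<open>y = T b\<close> is at most \<open>-(K(L + 1) + log 2) N\<close>.

  If some \<open>T\<^sup>q b\<close> with \<open>q \<le> N\<close> is \<open>e\<^sup>-\<^sup>K\<^sup>N\<close>-close to \<open>b\<close>, then so is the nearest point
  \<open>m / (2\<^sup>q - 1)\<close>, which has period \<open>q\<close>; its single term already gives average \<open>\<le> -K\<close>.
  Otherwise the orbit of \<open>y\<close> stays \<open>e\<^sup>-\<^sup>K\<^sup>N\<close>-far from \<open>b\<close> for \<open>N\<close> steps, and the periodic
  point of period \<open>n = (L + 1) N\<close> repeating the first \<open>n\<close> binary digits of \<open>y\<close> shadows it so
  closely that each of its first \<open>N\<close> terms exceeds the corresponding term for \<open>y\<close> by at most
  \<open>log 2\<close>; all other terms are \<open>\<le> 0\<close>, so its sum is at most \<open>-K n\<close>.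
\<close>

lemma sum_uminus_ereal_nonpos:
  fixes f :: "'a \<Rightarrow> ereal"
  assumes "\<And>i. i \<in> I \<Longrightarrow> f i \<le> 0"
  shows "(\<Sum>i\<in>I. - f i) = - (\<Sum>i\<in>I. f i)"
  using assms
proof (induction I rule: infinite_finite_induct)
  case (insert x F)
  moreover have "f x \<le> 0" "sum f F \<le> 0"
    using insert.prems by (auto intro: sum_nonpos)
  ultimately show ?case by (cases "f x"; cases "sum f F") auto
qed simp_all

lemma enn2ereal_ennreal_mult: "0 \<le> a \<Longrightarrow> enn2ereal (ennreal a * x) = ereal a * enn2ereal x"
  by (simp add: times_ennreal.rep_eq)

lemma sum_le_sum_subset_nonpos:
  fixes f :: "'a \<Rightarrow> 'b::ordered_comm_monoid_add"
  assumes "finite A" "B \<subseteq> A" "\<And>i. i \<in> A - B \<Longrightarrow> f i \<le> 0"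
  shows "sum f A \<le> sum f B"
proof -
  have "sum f A = sum f (A - B) + sum f B"
    using assms(2,1) by (rule sum.subset_diff)
  also have "\<dots> \<le> 0 + sum f B"
    using assms(3) by (intro add_right_mono sum_nonpos) auto
  finally show ?thesis by simp
qed

lemma card_lessThan_shift:
  assumes "P n = P 0"
  shows "card {i\<in>{..<n}. P (Suc i)} = card {i\<in>{..<n}. P i}"
proof -
  have "(\<Sum>i<Suc n. of_bool (P i)) = of_bool (P 0) + (\<Sum>i<n. of_bool (P (Suc i)) :: nat)"
    by (rule sum.lessThan_Suc_shift)
  then have "(\<Sum>i<n. of_bool (P (Suc i))) = (\<Sum>i<n. of_bool (P i) :: nat)"
    using assms by simp
  then show ?thesis
    by (simp add: Int_def)
qed

lemma frac_pow2_mult_frac: "frac (2 ^ k * frac z) = frac (2 ^ k * z)"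
proof -
  have "2 ^ k * frac z = 2 ^ k * z + of_int (- (2 ^ k * \<lfloor>z\<rfloor>))"
    by (simp add: frac_def algebra_simps)
  then show ?thesis by (metis frac_add_of_int_right)
qed

section \<open>Distance to the singularity\<close>

definition abs_sin_pi :: "real \<Rightarrow> real" where
  "abs_sin_pi t = \<bar>sin (pi * t)\<bar>"

lemma abs_sin_pi_add_of_int: "abs_sin_pi (t + of_int k) = abs_sin_pi t"
proof -
  have "sin (of_int k * pi) = 0" by (simp add: sin_times_pi_eq_0)
  moreover have "\<bar>cos (of_int k * pi)\<bar> = 1"
    using sin_cos_squared_add[of "of_int k * pi"] \<open>sin (of_int k * pi) = 0\<close>
    by (auto simp: power2_eq_1_iff)
  ultimately show ?thesis
    by (simp add: abs_sin_pi_def distrib_left sin_add abs_mult mult.commute)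
qed

lemma abs_sin_pi_frac_diff: "abs_sin_pi (frac z - b) = abs_sin_pi (z - b)"
  using abs_sin_pi_add_of_int[of "z - b" "- \<lfloor>z\<rfloor>"] by (simp add: frac_def algebra_simps)

lemma abs_sin_pi_minus: "abs_sin_pi (- t) = abs_sin_pi t"
  by (simp add: abs_sin_pi_def)

lemma abs_sin_pi_abs: "abs_sin_pi \<bar>t\<bar> = abs_sin_pi t"
  by (simp add: abs_if abs_sin_pi_minus)

lemma abs_sin_pi_mono:
  assumes "0 \<le> u" "u \<le> v" "v \<le> 1/2"
  shows "abs_sin_pi u \<le> abs_sin_pi v"
proof -
  have "sin (pi * u) \<le> sin (pi * v)"
    by (rule sin_monotone_2pi_le) (use assms in \<open>auto intro: mult_left_mono order.trans[of _ 0]\<close>)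
  moreover have "0 \<le> sin (pi * u)"
    by (rule sin_ge_zero) (use assms in \<open>auto intro: order.trans[of _ "pi * v"] mult_left_mono\<close>)
  ultimately show ?thesis by (simp add: abs_sin_pi_def)
qed

lemma abs_sin_pi_lipschitz: "\<bar>abs_sin_pi u - abs_sin_pi v\<bar> \<le> pi * \<bar>u - v\<bar>"
proof -
  have "\<bar>sin (pi * u) - sin (pi * v)\<bar>
      = 2 * \<bar>sin ((pi * u - pi * v) / 2)\<bar> * \<bar>cos ((pi * u + pi * v) / 2)\<bar>"
    by (simp add: sin_diff_sin abs_mult)
  also have "\<dots> \<le> 2 * \<bar>(pi * u - pi * v) / 2\<bar> * 1"
    by (intro mult_mono abs_sin_x_le_abs_x) auto
  also have "\<dots> = pi * \<bar>u - v\<bar>"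
    by (simp add: abs_mult right_diff_distrib[symmetric])
  finally show ?thesis by (simp add: abs_sin_pi_def)
qed

lemma abs_sin_pi_round_div_le:
  assumes "1 \<le> D"
  shows "abs_sin_pi (of_int (round (D * b)) / D - b) \<le> abs_sin_pi (D * b)"
proof -
  define \<delta> where "\<delta> = D * b - of_int (round (D * b))"
  have "of_int (round (D * b)) / D - b = - (\<delta> / D)"
    using assms by (simp add: \<delta>_def field_simps)
  then have "abs_sin_pi (of_int (round (D * b)) / D - b) = abs_sin_pi \<bar>\<delta> / D\<bar>"
    by (simp only: abs_sin_pi_minus abs_sin_pi_abs)
  also have "\<dots> = abs_sin_pi (\<bar>\<delta>\<bar> / D)"
    using assms by simp
  also have "\<dots> \<le> abs_sin_pi \<bar>\<delta>\<bar>"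
    using assms of_int_round_abs_le[of "D * b"]
    by (intro abs_sin_pi_mono) (auto simp: \<delta>_def divide_le_eq mult_le_cancel_left1 abs_minus_commute)
  also have "\<dots> = abs_sin_pi (D * b)"
    using abs_sin_pi_add_of_int[of "D * b" "- round (D * b)"]
    by (simp add: abs_sin_pi_abs \<delta>_def)
  finally show ?thesis .
qed

lemma abs_cos_eq_abs_sin_pi: "\<bar>cos (pi * (x + c))\<bar> = abs_sin_pi (x - bc c)"
proof -
  have "pi * (x + c) = pi * (x - bc c) + pi / 2" by (simp add: bc_def algebra_simps)
  then show ?thesis by (simp add: abs_sin_pi_def cos_add)
qed

lemma fc_eq_ln: "0 < abs_sin_pi (x - bc c) \<Longrightarrow> fc c x = ereal (ln (abs_sin_pi (x - bc c)))"
  using abs_cos_eq_abs_sin_pi[of x c] by (auto simp: fc_def)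

lemma fc_le_ln: "abs_sin_pi (x - bc c) \<le> t \<Longrightarrow> 0 < t \<Longrightarrow> fc c x \<le> ereal (ln t)"
  using abs_cos_eq_abs_sin_pi[of x c] by (auto simp: fc_def)

lemma fc_nonpos: "fc c x \<le> 0"
  by (simp add: fc_def)

lemma borel_measurable_fc: "fc c \<in> borel_measurable borel"
  unfolding fc_def by measurable

section \<open>Periodic points of the doubling map\<close>

lemma Tmap_in_unit: "Tmap x \<in> {0..<1}"
  by (simp add: Tmap_def frac_lt_1)

lemma borel_measurable_Tmap: "Tmap \<in> borel_measurable borel"
  unfolding Tmap_def frac_def by measurable

lemma funpow_Tmap_Suc: "(Tmap ^^ Suc i) x = frac (2 ^ Suc i * x)"
proof (induction i)
  case 0
  then show ?case by (simp add: Tmap_def)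
next
  case (Suc i)
  then show ?case
    using frac_pow2_mult_frac[of 1 "2 ^ Suc i * x"] by (simp add: Tmap_def mult.assoc)
qed

lemma funpow_Tmap_frac: "(Tmap ^^ i) (frac z) = frac (2 ^ i * z)"
proof (cases i)
  case 0
  then show ?thesis by simp
next
  case (Suc j)
  then show ?thesis by (simp only: funpow_Tmap_Suc frac_pow2_mult_frac)
qed

lemma funpow_Tmap_in_unit: "p \<in> {0..<1} \<Longrightarrow> (Tmap ^^ i) p \<in> {0..<1}"
  by (cases i) (simp_all add: Tmap_def frac_lt_1)

lemma Tmap_measurable_unit:
  "Tmap \<in> restrict_space borel {0..<1} \<rightarrow>\<^sub>M restrict_space borel {0..<1}"
  by (intro measurable_restrict_space2 measurable_restrict_space1 borel_measurable_Tmap)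
    (use Tmap_in_unit in blast)

definition periodic_point :: "nat \<Rightarrow> real \<Rightarrow> bool" where
  "periodic_point n p \<longleftrightarrow> 0 < n \<and> p \<in> {0..<1} \<and> (Tmap ^^ n) p = p"

lemma periodic_point_frac_div:
  fixes m :: int
  assumes "0 < q"
  shows "periodic_point q (frac (m / (2 ^ q - 1)))"
proof -
  have "(2::real) ^ q \<noteq> 1" using one_less_power[OF _ assms, of "2::real"] by simp
  then have "2 ^ q * (m / (2 ^ q - 1)) = m / (2 ^ q - 1) + of_int m"
    by (simp add: field_simps)
  then show ?thesis
    using assms by (simp add: periodic_point_def funpow_Tmap_frac frac_lt_1)
qed

lemma periodic_point_near_return:
  assumes "0 < q"
  shows "\<exists>p. periodic_point q p \<and> abs_sin_pi (p - b) \<le> abs_sin_pi ((Tmap ^^ q) b - b)"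
proof -
  define D :: real where "D = 2 ^ q - 1"
  have "1 \<le> D"
    using power_increasing[of 1 q "2::real"] assms by (simp add: D_def)
  define p where "p = frac (of_int (round (D * b)) / D)"
  have "abs_sin_pi (p - b) \<le> abs_sin_pi (D * b)"
    using abs_sin_pi_round_div_le[OF \<open>1 \<le> D\<close>] by (simp add: p_def abs_sin_pi_frac_diff)
  also have "D * b = 2 ^ q * b - b"
    by (simp add: D_def algebra_simps)
  also have "abs_sin_pi \<dots> = abs_sin_pi ((Tmap ^^ q) b - b)"
    using assms by (metis Suc_pred funpow_Tmap_Suc abs_sin_pi_frac_diff)
  finally show ?thesis
    using periodic_point_frac_div[OF assms] by (auto simp: p_def D_def)
qed

lemma floor_pow2_div_approx:
  fixes y :: real
  assumes "y \<in> {0..<1}" "0 < n"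
  shows "\<bar>of_int \<lfloor>2 ^ n * y\<rfloor> / (2 ^ n - 1) - y\<bar> \<le> 1 / 2 ^ n"
proof -
  define m where "m = \<lfloor>2 ^ n * y\<rfloor>"
  define D :: real where "D = 2 ^ n - 1"
  define p where "p = m / D"
  have "1 \<le> D" using power_increasing[of 1 n "2::real"] assms by (simp add: D_def)
  have "0 \<le> m" "m < 2 ^ n"
    using assms by (auto simp: m_def floor_less_iff)
  then have "real_of_int m \<le> of_int (2 ^ n - 1)"
    by (simp only: of_int_le_iff)
  then have "0 \<le> p" "p \<le> 1"
    using \<open>0 \<le> m\<close> \<open>1 \<le> D\<close> by (auto simp: p_def D_def)
  moreover have "m \<le> 2 ^ n * y" "2 ^ n * y < m + 1"
    by (simp_all add: m_def)
  moreover have "2 ^ n * p = m + p"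
    using \<open>1 \<le> D\<close> by (simp add: p_def D_def field_simps)
  ultimately have "\<bar>2 ^ n * p - 2 ^ n * y\<bar> \<le> 1"
    unfolding abs_le_iff by linarith
  then have "2 ^ n * \<bar>p - y\<bar> \<le> 1"
    by (simp add: abs_mult flip: right_diff_distrib)
  then show ?thesis
    by (simp add: p_def m_def D_def field_simps)
qed

lemma periodic_point_shadowing:
  assumes "y \<in> {0..<1}" "0 < n"
  shows "\<exists>p. periodic_point n p \<and>
    (\<forall>i. abs_sin_pi ((Tmap ^^ i) p - b) \<le> abs_sin_pi ((Tmap ^^ i) y - b) + pi * 2 ^ i / 2 ^ n)"
proof -
  define p' :: real where "p' = of_int \<lfloor>2 ^ n * y\<rfloor> / (2 ^ n - 1)"
  have "abs_sin_pi ((Tmap ^^ i) (frac p') - b) \<le> abs_sin_pi ((Tmap ^^ i) y - b) + pi * 2 ^ i / 2 ^ n"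
    for i
  proof -
    have "frac y = y" using assms(1) by (simp add: frac_eq)
    then have "abs_sin_pi ((Tmap ^^ i) (frac p') - b) - abs_sin_pi ((Tmap ^^ i) y - b)
        = abs_sin_pi (2 ^ i * p' - b) - abs_sin_pi (2 ^ i * y - b)"
      by (metis funpow_Tmap_frac abs_sin_pi_frac_diff)
    also have "\<dots> \<le> pi * \<bar>(2 ^ i * p' - b) - (2 ^ i * y - b)\<bar>"
      using abs_sin_pi_lipschitz by (rule abs_le_D1)
    also have "\<dots> = pi * 2 ^ i * \<bar>p' - y\<bar>"
      by (simp add: abs_mult flip: right_diff_distrib)
    also have "\<dots> \<le> pi * 2 ^ i * (1 / 2 ^ n)"
      using floor_pow2_div_approx[OF assms] by (intro mult_left_mono) (simp_all add: p'_def)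
    finally show ?thesis by simp
  qed
  then show ?thesis
    using periodic_point_frac_div[OF assms(2)] by (auto simp: p'_def)
qed

section \<open>Invariant measures on periodic orbits\<close>

definition orbit_measure :: "nat \<Rightarrow> real \<Rightarrow> real measure" where
  "orbit_measure n p =
    distr (uniform_count_measure {..<n}) (restrict_space borel {0..<1}) (\<lambda>i. (Tmap ^^ i) p)"

lemma measurable_orbit:
  "p \<in> {0..<1} \<Longrightarrow>
    (\<lambda>i. (Tmap ^^ i) p) \<in> uniform_count_measure {..<n} \<rightarrow>\<^sub>M restrict_space borel {0..<1}"
  by (intro measurable_restrict_space2)
    (simp_all add: Pi_iff funpow_Tmap_in_unit[simplified]
      measurable_cong_sets[OF sets_uniform_count_measure_count_space refl])

lemma orbit_measure_in_MT:
  assumes "periodic_point n p"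
  shows "orbit_measure n p \<in> MT"
proof -
  let ?U = "uniform_count_measure {..<n}" and ?B = "restrict_space borel {0..<1::real}"
  let ?orbit = "\<lambda>i. (Tmap ^^ i) p"
  have "0 < n" "p \<in> {0..<1}" "(Tmap ^^ n) p = p"
    using assms by (simp_all add: periodic_point_def)
  note orbit = measurable_orbit[OF \<open>p \<in> {0..<1}\<close>, of n]
  have visits_shift: "card {i\<in>{..<n}. ?orbit (Suc i) \<in> A} = card {i\<in>{..<n}. ?orbit i \<in> A}" for A
    using card_lessThan_shift[of "\<lambda>i. ?orbit i \<in> A" n] \<open>(Tmap ^^ n) p = p\<close> by simp
  have "emeasure (orbit_measure n p) (Tmap -` A \<inter> {0..<1}) = emeasure (orbit_measure n p) A"
    if "A \<in> sets ?B" for A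
  proof -
    have "Tmap -` A \<inter> {0..<1} \<in> sets ?B"
      using measurable_sets[OF Tmap_measurable_unit that] by simp
    then have "emeasure (orbit_measure n p) (Tmap -` A \<inter> {0..<1})
        = emeasure ?U {i\<in>{..<n}. ?orbit (Suc i) \<in> A}"
      unfolding orbit_measure_def using funpow_Tmap_in_unit[OF \<open>p \<in> {0..<1}\<close>]
      by (subst emeasure_distr[OF orbit])
        (auto simp: space_uniform_count_measure intro!: arg_cong[where f = "emeasure ?U"])
    also have "\<dots> = emeasure ?U {i\<in>{..<n}. ?orbit i \<in> A}"
      using visits_shift[of A] by (subst (1 2) emeasure_uniform_count_measure) auto
    also have "\<dots> = emeasure (orbit_measure n p) A"
      unfolding orbit_measure_def using that
      by (subst emeasure_distr[OF orbit])
        (auto simp: space_uniform_count_measure intro!: arg_cong[where f = "emeasure ?U"])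
    finally show ?thesis .
  qed
  moreover have "prob_space (orbit_measure n p)"
    unfolding orbit_measure_def using \<open>0 < n\<close>
    by (intro prob_space.prob_space_distr[OF _ orbit] prob_space_uniform_count_measure) auto
  ultimately show ?thesis
    by (simp add: MT_def orbit_measure_def)
qed

lemma nn_integral_orbit_measure:
  assumes "p \<in> {0..<1}" "g \<in> borel_measurable (restrict_space borel {0..<1})"
  shows "(\<integral>\<^sup>+ x. g x \<partial>orbit_measure n p) = ennreal (1 / n) * (\<Sum>i<n. g ((Tmap ^^ i) p))"
  unfolding orbit_measure_def using assms(2)
  by (subst nn_integral_distr[OF measurable_orbit[OF assms(1)]])
    (simp_all add: uniform_count_measure_def nn_integral_point_measure_finite sum_distrib_left)

lemma int_fc_orbit_measure:
  assumes "p \<in> {0..<1}"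
  shows "int_fc c (orbit_measure n p) = ereal (1 / n) * (\<Sum>i<n. fc c ((Tmap ^^ i) p))"
proof -
  have "(\<lambda>x. e2ennreal (- fc c x)) \<in> borel_measurable (restrict_space borel {0..<1})"
    using borel_measurable_fc by (intro measurable_restrict_space1) measurable
  then have "int_fc c (orbit_measure n p)
      = - (ereal (1 / n) * enn2ereal (\<Sum>i<n. e2ennreal (- fc c ((Tmap ^^ i) p))))"
    by (simp add: int_fc_def nn_integral_orbit_measure[OF assms] enn2ereal_ennreal_mult)
  also have "enn2ereal (\<Sum>i<n. e2ennreal (- fc c ((Tmap ^^ i) p))) = (\<Sum>i<n. - fc c ((Tmap ^^ i) p))"
    by (simp add: fc_nonpos enn2ereal_e2ennreal flip: sum_enn2ereal)
  finally show ?thesis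
    by (simp add: sum_uminus_ereal_nonpos fc_nonpos)
qed

lemma alpha_le_orbit_average:
  assumes "periodic_point n p"
  shows "alpha c \<le> ereal (1 / n) * (\<Sum>i<n. fc c ((Tmap ^^ i) p))"
proof -
  have "alpha c \<le> int_fc c (orbit_measure n p)"
    unfolding alpha_def using orbit_measure_in_MT[OF assms] by (rule INF_lower)
  then show ?thesis
    using assms by (simp add: int_fc_orbit_measure periodic_point_def)
qed

section \<open>Periodic orbits with very negative Birkhoff sums\<close>

lemma chi_minus_MInfty_sum_le:
  assumes "chi_minus f y = -\<infinity>"
  shows "\<exists>N\<ge>1. (\<Sum>i<N. f ((Tmap ^^ i) y)) \<le> ereal (- M * N)"
proof (rule ccontr)
  assume no_N: "\<not> ?thesis"
  have "ereal (- M) \<le> ereal (1 / real N) * (\<Sum>i<N. f ((Tmap ^^ i) y))" if "N \<ge> 1" for N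
  proof -
    have "ereal (- M * N) \<le> (\<Sum>i<N. f ((Tmap ^^ i) y))"
      using no_N that by auto
    then have "ereal (1 / N) * ereal (- M * N) \<le> ereal (1 / N) * (\<Sum>i<N. f ((Tmap ^^ i) y))"
      by (rule ereal_mult_left_mono) simp
    then show ?thesis
      using that by simp
  qed
  then have "ereal (- M) \<le> chi_minus f y"
    unfolding chi_minus_def by (intro Liminf_bounded) (auto simp: eventually_sequentially)
  then show False
    using assms by simp
qed

lemma periodic_orbit_sum_le_of_close_return:
  assumes "0 < q" "0 < \<epsilon>" "abs_sin_pi ((Tmap ^^ q) (bc c) - bc c) \<le> \<epsilon>"
  shows "\<exists>p. periodic_point q p \<and> (\<Sum>i<q. fc c ((Tmap ^^ i) p)) \<le> ereal (ln \<epsilon>)"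
proof -
  obtain p where p: "periodic_point q p" "abs_sin_pi (p - bc c) \<le> \<epsilon>"
    using periodic_point_near_return[OF assms(1), of "bc c"] assms(3) by auto
  have "(\<Sum>i<q. fc c ((Tmap ^^ i) p)) \<le> (\<Sum>i\<in>{0}. fc c ((Tmap ^^ i) p))"
    using assms(1) by (intro sum_le_sum_subset_nonpos) (auto simp: fc_nonpos)
  also have "\<dots> \<le> ereal (ln \<epsilon>)"
    using fc_le_ln[OF p(2) assms(2)] by simp
  finally show ?thesis
    using p(1) by blast
qed

lemma periodic_orbit_sum_le_of_shadowing:
  assumes "y \<in> {0..<1}" "N \<le> n" "0 < n" "pi * 2 ^ N \<le> \<epsilon> * 2 ^ n"
    and far: "\<And>i. i < N \<Longrightarrow> \<epsilon> < abs_sin_pi ((Tmap ^^ i) y - bc c)"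
  shows "\<exists>p. periodic_point n p \<and>
    (\<Sum>i<n. fc c ((Tmap ^^ i) p)) \<le> ereal (N * ln 2) + (\<Sum>i<N. fc c ((Tmap ^^ i) y))"
proof -
  obtain p where p: "periodic_point n p"
    and close: "\<And>i. abs_sin_pi ((Tmap ^^ i) p - bc c)
      \<le> abs_sin_pi ((Tmap ^^ i) y - bc c) + pi * 2 ^ i / 2 ^ n"
    using periodic_point_shadowing[OF assms(1,3)] by blast
  have "0 < \<epsilon> * 2 ^ n"
    by (rule order.strict_trans2[OF _ assms(4)]) simp
  then have "0 < \<epsilon>"
    by (simp add: zero_less_mult_iff)
  have "fc c ((Tmap ^^ i) p) \<le> ereal (ln 2) + fc c ((Tmap ^^ i) y)" if "i < N" for i
  proof -
    define s where "s = abs_sin_pi ((Tmap ^^ i) y - bc c)"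
    have "\<epsilon> < s"
      using far[OF that] by (simp add: s_def)
    have "pi * 2 ^ i / 2 ^ n \<le> pi * 2 ^ N / 2 ^ n"
      using that by (intro divide_right_mono mult_left_mono power_increasing) auto
    also have "\<dots> \<le> \<epsilon>"
      using assms(4) by (simp add: divide_le_eq)
    finally have "abs_sin_pi ((Tmap ^^ i) p - bc c) \<le> 2 * s"
      using close[of i] \<open>\<epsilon> < s\<close> by (simp add: s_def)
    moreover have "0 < s"
      using \<open>0 < \<epsilon>\<close> \<open>\<epsilon> < s\<close> by linarith
    ultimately show ?thesis
      using fc_le_ln[of "(Tmap ^^ i) p" c "2 * s"] fc_eq_ln[of "(Tmap ^^ i) y" c]
      by (simp add: s_def ln_mult)
  qed
  then have "(\<Sum>i<N. fc c ((Tmap ^^ i) p)) \<le> (\<Sum>i<N. ereal (ln 2) + fc c ((Tmap ^^ i) y))"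
    by (rule sum_mono) simp
  moreover have "(\<Sum>i<n. fc c ((Tmap ^^ i) p)) \<le> (\<Sum>i<N. fc c ((Tmap ^^ i) p))"
    using assms(2) by (intro sum_le_sum_subset_nonpos) (auto simp: fc_nonpos)
  ultimately show ?thesis
    using p by (auto simp: sum.distrib)
qed

lemma pi_pow2_le_exp_pow2:
  fixes K :: real and L N :: nat
  assumes "0 \<le> K" "1 \<le> N" "K + ln pi \<le> L * ln 2"
  shows "pi * 2 ^ N \<le> exp (- K * N) * 2 ^ ((L + 1) * N)"
proof -
  have "K * N + ln pi \<le> N * (K + ln pi)"
    using assms(2) ln_ge_zero[of pi] pi_ge_two by (simp add: algebra_simps mult_le_cancel_right1)
  also have "\<dots> \<le> real (L * N) * ln 2"
    using mult_left_mono[OF assms(3), of N] by (simp add: algebra_simps)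
  finally have "exp (K * N + ln pi) \<le> exp (real (L * N) * ln 2)"
    by (simp only: exp_le_cancel_iff)
  moreover have "exp (real (L * N) * ln 2) = 2 ^ (L * N)"
    by (subst exp_of_nat_mult) simp
  ultimately have "exp (K * N) * pi \<le> 2 ^ (L * N)"
    by (simp add: exp_add)
  then show ?thesis
    by (simp add: exp_minus power_add field_simps)
qed

lemma exists_periodic_orbit_sum_le:
  assumes "0 \<le> K" and chi: "chi_minus (fc c) (Tmap (bc c)) = -\<infinity>"
  shows "\<exists>n p. periodic_point n p \<and> (\<Sum>i<n. fc c ((Tmap ^^ i) p)) \<le> ereal (- K * n)"
proof -
  define b y where "b = bc c" and "y = Tmap (bc c)"
  obtain L :: nat where L: "K + ln pi \<le> L * ln 2"
    using real_nat_ceiling_ge[of "(K + ln pi) / ln 2"] by (auto simp: divide_le_eq)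
  obtain N :: nat where "1 \<le> N"
    and sum_y: "(\<Sum>i<N. fc c ((Tmap ^^ i) y)) \<le> ereal (- (K * (L + 1) + ln 2) * N)"
    using chi_minus_MInfty_sum_le[OF chi] unfolding y_def by blast
  define \<epsilon> where "\<epsilon> = exp (- K * N)"
  have orbit_y: "(Tmap ^^ i) y = (Tmap ^^ Suc i) b" for i
    by (simp add: y_def b_def funpow_Suc_right del: funpow.simps)
  show ?thesis
  proof (cases "\<exists>i<N. abs_sin_pi ((Tmap ^^ i) y - b) \<le> \<epsilon>")
    case True
    then obtain i where "i < N" "abs_sin_pi ((Tmap ^^ Suc i) b - b) \<le> \<epsilon>"
      by (auto simp: orbit_y)
    then obtain p where "periodic_point (Suc i) p"
      and "(\<Sum>j<Suc i. fc c ((Tmap ^^ j) p)) \<le> ereal (ln \<epsilon>)"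
      using periodic_orbit_sum_le_of_close_return[of "Suc i" \<epsilon>] by (auto simp: b_def \<epsilon>_def)
    moreover have "ln \<epsilon> \<le> - K * Suc i"
      using \<open>i < N\<close> \<open>0 \<le> K\<close> by (simp add: \<epsilon>_def mult_left_mono)
    ultimately show ?thesis
      by (intro exI[of _ "Suc i"] exI[of _ p]) (auto intro: order.trans)
  next
    case False
    define n where "n = (L + 1) * N"
    have "y \<in> {0..<1}"
      unfolding y_def by (rule Tmap_in_unit)
    moreover have "N \<le> n" "0 < n"
      using \<open>1 \<le> N\<close> by (simp_all add: n_def)
    moreover have "pi * 2 ^ N \<le> \<epsilon> * 2 ^ n"
      unfolding \<epsilon>_def n_def using pi_pow2_le_exp_pow2[OF \<open>0 \<le> K\<close> \<open>1 \<le> N\<close> L] .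
    ultimately obtain p where "periodic_point n p"
      and "(\<Sum>i<n. fc c ((Tmap ^^ i) p)) \<le> ereal (N * ln 2) + (\<Sum>i<N. fc c ((Tmap ^^ i) y))"
      using periodic_orbit_sum_le_of_shadowing[of y N n \<epsilon> c] False by (auto simp: b_def not_le)
    moreover have "ereal (N * ln 2) + (\<Sum>i<N. fc c ((Tmap ^^ i) y)) \<le> ereal (- K * n)"
      using add_left_mono[OF sum_y, of "ereal (N * ln 2)"] by (simp add: n_def algebra_simps)
    ultimately show ?thesis
      by (auto intro: order.trans)
  qed
qed

theorem proposition2p2:
  fixes c :: real
  assumes "0 \<le> c" and "c < 1"
    and "chi_minus (fc c) (Tmap (bc c)) = -\<infinity>"
  shows "alpha c = -\<infinity>"
proof (rule ereal_bot)
  fix B :: real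
  define K where "K = max 0 (- B)"
  obtain n p where "periodic_point n p" and sum_p: "(\<Sum>i<n. fc c ((Tmap ^^ i) p)) \<le> ereal (- K * n)"
    using exists_periodic_orbit_sum_le[OF _ assms(3), of K] by (auto simp: K_def)
  then have "0 < n"
    by (simp add: periodic_point_def)
  have "alpha c \<le> ereal (1 / n) * (\<Sum>i<n. fc c ((Tmap ^^ i) p))"
    using \<open>periodic_point n p\<close> by (rule alpha_le_orbit_average)
  also have "\<dots> \<le> ereal (1 / n) * ereal (- K * n)"
    using sum_p by (rule ereal_mult_left_mono) simp
  also have "\<dots> \<le> ereal B"
    using \<open>0 < n\<close> by (simp add: K_def)
  finally show "alpha c \<le> ereal B" .
qed

end
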